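(* Let $G\sim G(p,c/p)$ with $c=\Omega(p^{3/4+\epsilon'})$ for some $\epsilon'>0$. Partition the vertex set into three parts $A,B,C$ each of size $p/3$, let $\gamma=c^2/(6p)$, and let $m_{A,C}$ be the number of pairs $(a,c_0)\in A\times C$ such that at least $\gamma$ nodes of $B$ are adjacent to both $a$ and $c_0$. Then $$\Pr\Big(m_{A,C}\le\tfrac12(p/3)^2\Big)\le\frac{p}{3}\exp\!\Big(-\frac{p}{36}\Big).$$
   Context: $G(p,c/p)$ is the Erdős–Rényi random graph on $p$ vertices with independent edge probability $c/p$. *)

theory Defs
  imports "HOL-Probability.Probability" "HOL-Library.Landau_Symbols"
begin

definition vertex_pairs :: "nat \<Rightarrow> nat set set" where
  "vertex_pairs p = {e. e \<subseteq> {..<p} \<and> card e = 2}"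

text \<open>Erdos-Renyi random graph G(p,q): each potential edge present independently
  with probability q. A graph is its edge indicator on unordered pairs.\<close>
definition erdos_renyi :: "nat \<Rightarrow> real \<Rightarrow> (nat set \<Rightarrow> bool) pmf" where
  "erdos_renyi p q = Pi_pmf (vertex_pairs p) False (\<lambda>_. bernoulli_pmf q)"

definition adj :: "(nat set \<Rightarrow> bool) \<Rightarrow> nat \<Rightarrow> nat \<Rightarrow> bool" where
  "adj G u v = (u \<noteq> v \<and> G {u, v})"

definition m_AC :: "(nat set \<Rightarrow> bool) \<Rightarrow> nat set \<Rightarrow> nat set \<Rightarrow> nat set \<Rightarrow> real \<Rightarrow> nat" where
  "m_AC G A B C \<gamma> =
     card {(a, c0). a \<in> A \<and> c0 \<in> C \<and>
                   real (card {b \<in> B. adj G a b \<and> adj G c0 b}) \<ge> \<gamma>}"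

end

theory Submission
  imports Defs
begin

text \<open>Call a vertex a of A low if it has fewer than c/4 neighbours in B (the mean is c/3),
  and let n = p/3. If m_{A,C} <= n^2/2, then either more than n/6 vertices of A are low, or
  some a that is not low has more than n/4 partners c0 in C with fewer than gamma common
  neighbours, i.e. fewer than gamma neighbours in N(a) \<inter> B; otherwise
  m_{A,C} >= (5n/6)(3n/4) > n^2/2.

  The edges from distinct vertices into B are disjoint, so their degrees into B are
  independent, and a Chernoff bound makes each one low with probability exp(-c/180).
  Conditionally on N(a) \<inter> B = N with |N| >= c/4, the degrees of the vertices of C into N
  are again independent and each is below gamma = c^2/(6p) with probability
  exp(-c^2/(120p)). A union bound over the at most 2^n candidate sets of exceptional
  vertices gives each of the two events (the second one for each fixed a) probability at
  most exp(-n) once c^2/p >= 2160, which holds eventually because c >> p^(3/4).\<close>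

lemma prob_Pi_pmf_conj_indep:
  fixes Q R :: "('a \<Rightarrow> 'b) \<Rightarrow> bool"
  assumes fin: "finite I" and J: "J \<subseteq> I"
    and Q: "\<And>f g. (\<And>x. x \<in> J \<Longrightarrow> f x = g x) \<Longrightarrow> Q f = Q g"
    and R: "\<And>f g. (\<And>x. x \<in> I - J \<Longrightarrow> f x = g x) \<Longrightarrow> R f = R g"
  shows "measure_pmf.prob (Pi_pmf I d p) {f. Q f \<and> R f} =
         measure_pmf.prob (Pi_pmf I d p) {f. Q f} * measure_pmf.prob (Pi_pmf I d p) {f. R f}"
proof -
  define M1 where "M1 = Pi_pmf J d p"
  define M2 where "M2 = Pi_pmf (I - J) d p"
  define glue where "glue = (\<lambda>(f::'a \<Rightarrow> 'b, g) x. if x \<in> J then f x else g x)"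
  have "Pi_pmf (J \<union> (I - J)) d p = map_pmf glue (pair_pmf M1 M2)"
    unfolding M1_def M2_def glue_def using fin J by (intro Pi_pmf_union) (auto dest: finite_subset)
  then have Pi_eq: "Pi_pmf I d p = map_pmf glue (pair_pmf M1 M2)"
    using J by (simp add: Un_absorb1)
  have prob_glue: "measure_pmf.prob (Pi_pmf I d p) {f. Q' f \<and> R' f} =
      measure_pmf.prob M1 {f. Q' f} * measure_pmf.prob M2 {g. R' g}"
    if Q': "\<And>f g. (\<And>x. x \<in> J \<Longrightarrow> f x = g x) \<Longrightarrow> Q' f = Q' g"
      and R': "\<And>f g. (\<And>x. x \<in> I - J \<Longrightarrow> f x = g x) \<Longrightarrow> R' f = R' g"
    for Q' R' :: "('a \<Rightarrow> 'b) \<Rightarrow> bool"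
  proof -
    have "Q' (glue (f, g)) = Q' f" "R' (glue (f, g)) = R' g" for f g
      by (rule Q', simp add: glue_def, rule R', simp add: glue_def)
    then have "glue -` {f. Q' f \<and> R' f} = {f. Q' f} \<times> {g. R' g}"
      by auto
    then have "measure_pmf.prob (Pi_pmf I d p) {f. Q' f \<and> R' f} =
        measure_pmf.prob (pair_pmf M1 M2) ({f. Q' f} \<times> {g. R' g})"
      by (simp add: Pi_eq)
    also have "\<dots> = measure_pmf.prob (pair_pmf M1 M2)
        (({f. Q' f} \<inter> set_pmf M1) \<times> ({g. R' g} \<inter> set_pmf M2))"
      by (subst measure_Int_set_pmf[symmetric]) (simp add: Times_Int_Times)
    also have "\<dots> = measure_pmf.prob M1 {f. Q' f} * measure_pmf.prob M2 {g. R' g}"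
      by (subst measure_pmf_prob_product) (simp_all add: measure_Int_set_pmf)
    finally show ?thesis .
  qed
  have "measure_pmf.prob (Pi_pmf I d p) {f. Q f} = measure_pmf.prob M1 {f. Q f}"
    using prob_glue[of Q "\<lambda>_. True", OF Q] by simp
  moreover have "measure_pmf.prob (Pi_pmf I d p) {f. R f} = measure_pmf.prob M2 {f. R f}"
    using prob_glue[of "\<lambda>_. True" R, OF _ R] by simp
  ultimately show ?thesis
    using prob_glue[OF Q R] by simp
qed

lemma prob_Pi_pmf_Ball_indep:
  fixes K :: "'j \<Rightarrow> 'a set" and P :: "'j \<Rightarrow> ('a \<Rightarrow> 'b) \<Rightarrow> bool"
  assumes fin: "finite I" and "finite L" and "\<And>j. j \<in> L \<Longrightarrow> K j \<subseteq> I"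
    and "\<And>i j. i \<in> L \<Longrightarrow> j \<in> L \<Longrightarrow> i \<noteq> j \<Longrightarrow> K i \<inter> K j = {}"
    and "\<And>j f g. j \<in> L \<Longrightarrow> (\<And>x. x \<in> K j \<Longrightarrow> f x = g x) \<Longrightarrow> P j f = P j g"
  shows "measure_pmf.prob (Pi_pmf I d p) {f. \<forall>j\<in>L. P j f} =
         (\<Prod>j\<in>L. measure_pmf.prob (Pi_pmf I d p) {f. P j f})"
  using assms(2-)
proof (induction L rule: finite_induct)
  case empty
  then show ?case by simp
next
  case (insert l L)
  have "{f. \<forall>j\<in>insert l L. P j f} = {f. P l f \<and> (\<forall>j\<in>L. P j f)}" by auto
  also have "measure_pmf.prob (Pi_pmf I d p) \<dots> =
      measure_pmf.prob (Pi_pmf I d p) {f. P l f} *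
      measure_pmf.prob (Pi_pmf I d p) {f. \<forall>j\<in>L. P j f}"
  proof (rule prob_Pi_pmf_conj_indep[OF fin])
    show "K l \<subseteq> I" using insert.prems(1) by simp
    show "P l f = P l g" if "\<And>x. x \<in> K l \<Longrightarrow> f x = g x" for f g
      using insert.prems(3)[of l f g] that by simp
    show "(\<forall>j\<in>L. P j f) = (\<forall>j\<in>L. P j g)" if fg: "\<And>x. x \<in> I - K l \<Longrightarrow> f x = g x" for f g
    proof -
      have "P j f = P j g" if j: "j \<in> L" for j
      proof (rule insert.prems(3))
        have "K j \<subseteq> I - K l"
          using j insert.hyps(2) insert.prems(1)[of j] insert.prems(2)[of j l] by auto
        then show "f x = g x" if "x \<in> K j" for x
          using that fg by blast
      qed (use j in simp)
      then show ?thesis by blast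
    qed
  qed
  also have "measure_pmf.prob (Pi_pmf I d p) {f. \<forall>j\<in>L. P j f} =
      (\<Prod>j\<in>L. measure_pmf.prob (Pi_pmf I d p) {f. P j f})"
    using insert.prems by (intro insert.IH) blast+
  finally show ?case using insert.hyps by simp
qed

definition nbrs :: "(nat set \<Rightarrow> bool) \<Rightarrow> nat \<Rightarrow> nat set \<Rightarrow> nat set" where
  "nbrs G v N = {b \<in> N. G {v, b}}"

lemma nbrs_cong:
  assumes "\<And>b. b \<in> N \<Longrightarrow> G {v, b} = G' {v, b}"
  shows "nbrs G v N = nbrs G' v N"
  using assms unfolding nbrs_def by auto

lemma finite_vertex_pairs: "finite (vertex_pairs p)"
  by (rule finite_subset[of _ "Pow {..<p}"]) (auto simp: vertex_pairs_def)

lemma doubleton_in_vertex_pairs: "u < p \<Longrightarrow> v < p \<Longrightarrow> u \<noteq> v \<Longrightarrow> {u, v} \<in> vertex_pairs p"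
  by (auto simp: vertex_pairs_def)

lemma finite_set_pmf_erdos_renyi: "finite (set_pmf (erdos_renyi p q))"
proof (rule finite_subset)
  show "set_pmf (erdos_renyi p q) \<subseteq> PiE_dflt (vertex_pairs p) False (\<lambda>_. UNIV)"
    unfolding erdos_renyi_def
    using set_Pi_pmf_subset[OF finite_vertex_pairs, of p False "\<lambda>_. bernoulli_pmf q"]
    by (auto simp: PiE_dflt_def)
qed (auto simp: finite_vertex_pairs)

lemma prob_erdos_renyi_stars_indep:
  fixes P :: "nat \<Rightarrow> (nat set \<Rightarrow> bool) \<Rightarrow> bool"
  assumes "finite L" "L \<subseteq> {..<p}" "L \<inter> B = {}" "B \<subseteq> {..<p}"
    and dep: "\<And>v G G'. v \<in> L \<Longrightarrow> (\<And>b. b \<in> B \<Longrightarrow> G {v, b} = G' {v, b}) \<Longrightarrow> P v G = P v G'"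
  shows "measure_pmf.prob (erdos_renyi p q) {G. \<forall>v\<in>L. P v G} =
         (\<Prod>v\<in>L. measure_pmf.prob (erdos_renyi p q) {G. P v G})"
  unfolding erdos_renyi_def
proof (rule prob_Pi_pmf_Ball_indep[OF finite_vertex_pairs \<open>finite L\<close>, where K = "\<lambda>v. (\<lambda>b. {v, b}) ` B"])
  show "(\<lambda>b. {v, b}) ` B \<subseteq> vertex_pairs p" if "v \<in> L" for v
    using that assms(2-4) by (auto intro!: doubleton_in_vertex_pairs)
  show "(\<lambda>b. {u, b}) ` B \<inter> (\<lambda>b. {v, b}) ` B = {}" if "u \<in> L" "v \<in> L" "u \<noteq> v" for u v
    using that assms(3) by (auto simp: doubleton_eq_iff)
  show "P v G = P v G'" if "v \<in> L" "\<And>x. x \<in> (\<lambda>b. {v, b}) ` B \<Longrightarrow> G x = G' x" for v G G'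
    using that by (intro dep) auto
qed

lemma expectation_pow_card_nbrs:
  fixes q \<beta> :: real
  assumes v: "v < p" and N: "N \<subseteq> {..<p}" "v \<notin> N" and q: "0 \<le> q" "q \<le> 1" and "0 \<le> \<beta>"
  shows "measure_pmf.expectation (erdos_renyi p q) (\<lambda>G. \<beta> ^ card (nbrs G v N)) =
         (1 - q * (1 - \<beta>)) ^ card N"
proof -
  define I where "I = vertex_pairs p"
  define S where "S = (\<lambda>b. {v, b}) ` N"
  have finI: "finite I" by (simp add: I_def finite_vertex_pairs)
  have SI: "S \<subseteq> I" unfolding S_def I_def using N v by (auto intro!: doubleton_in_vertex_pairs)
  have inj: "inj_on (\<lambda>b. {v, b}) N"
    using N(2) by (auto intro!: inj_onI simp: doubleton_eq_iff)
  define h where "h = (\<lambda>e x. if e \<in> S \<and> x then \<beta> else 1)"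
  have "(\<Prod>e\<in>I. h e (G e)) = \<beta> ^ card (nbrs G v N)" for G
  proof -
    have "(\<lambda>b. {v, b}) ` nbrs G v N = {e \<in> I. e \<in> S \<and> G e}"
      using SI unfolding nbrs_def S_def by auto
    moreover have "card ((\<lambda>b. {v, b}) ` nbrs G v N) = card (nbrs G v N)"
      by (rule card_image, rule inj_on_subset[OF inj]) (auto simp: nbrs_def)
    ultimately show ?thesis
      unfolding h_def using prod.inter_filter[OF finI, of "\<lambda>_. \<beta>" "\<lambda>e. e \<in> S \<and> G e"] by simp
  qed
  then have "measure_pmf.expectation (erdos_renyi p q) (\<lambda>G. \<beta> ^ card (nbrs G v N)) =
      measure_pmf.expectation (Pi_pmf I False (\<lambda>_. bernoulli_pmf q)) (\<lambda>G. \<Prod>e\<in>I. h e (G e))"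
    by (simp add: erdos_renyi_def I_def)
  also have "\<dots> = (\<Prod>e\<in>I. measure_pmf.expectation (bernoulli_pmf q) (h e))"
    using \<open>0 \<le> \<beta>\<close> by (intro expectation_prod_Pi_pmf finI integrable_measure_pmf_finite)
      (auto simp: h_def)
  also have "\<dots> = (\<Prod>e\<in>I. if e \<in> S then 1 - q * (1 - \<beta>) else 1)"
    using q by (intro prod.cong refl) (simp add: h_def algebra_simps)
  also have "\<dots> = (1 - q * (1 - \<beta>)) ^ card S"
    using SI by (simp add: prod.If_cases[OF finI] Int_absorb1)
  finally show ?thesis by (simp add: S_def card_image[OF inj])
qed

text \<open>Markov's inequality for \<open>\<beta> ^ X\<close>; the estimates \<open>ln (1/\<beta>) \<le> 1/\<beta> - 1\<close> and
  \<open>1 - x \<le> exp (-x)\<close> put the bound into this closed form.\<close>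
lemma prob_card_nbrs_le:
  fixes q \<beta> t :: real
  assumes v: "v < p" and N: "N \<subseteq> {..<p}" "v \<notin> N" and q: "0 \<le> q" "q \<le> 1"
    and \<beta>: "0 < \<beta>" "\<beta> \<le> 1" and t: "0 \<le> t"
  shows "measure_pmf.prob (erdos_renyi p q) {G. real (card (nbrs G v N)) \<le> t}
         \<le> exp ((1 - \<beta>) * (t / \<beta> - q * real (card N)))"
proof -
  define M where "M = erdos_renyi p q"
  define X where "X = (\<lambda>G. \<beta> ^ card (nbrs G v N))"
  have "{G. real (card (nbrs G v N)) \<le> t} \<subseteq> {G \<in> space M. \<beta> powr t \<le> X G}"
  proof safe
    fix G assume "real (card (nbrs G v N)) \<le> t"
    then have "\<beta> powr t \<le> \<beta> powr real (card (nbrs G v N))"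
      using \<beta> by (intro powr_mono') auto
    then show "\<beta> powr t \<le> X G"
      using \<beta> by (simp add: X_def powr_realpow)
  qed auto
  then have "measure_pmf.prob M {G. real (card (nbrs G v N)) \<le> t}
      \<le> measure_pmf.prob M {G \<in> space M. \<beta> powr t \<le> X G}"
    by (intro measure_pmf.finite_measure_mono) auto
  also have "\<dots> \<le> measure_pmf.expectation M X / \<beta> powr t"
    unfolding M_def using \<beta>
    by (intro integral_Markov_inequality_measure integrable_measure_pmf_finite
        finite_set_pmf_erdos_renyi) (auto simp: X_def)
  also have "\<dots> = (1 - q * (1 - \<beta>)) ^ card N * (1 / \<beta>) powr t"
    using expectation_pow_card_nbrs[OF v N q] \<beta> by (simp add: M_def X_def powr_divide)
  also have "\<dots> \<le> exp (- (q * (1 - \<beta>))) ^ card N * exp (t * (1 / \<beta> - 1))"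
  proof (intro mult_mono power_mono)
    have "ln (1 / \<beta>) \<le> 1 / \<beta> - 1"
      using \<beta> by (intro ln_le_minus_one) auto
    then show "(1 / \<beta>) powr t \<le> exp (t * (1 / \<beta> - 1))"
      using \<beta> t by (simp add: powr_def mult_left_mono)
  qed (use q \<beta> exp_ge_add_one_self[of "- (q * (1 - \<beta>))"] in \<open>auto simp: mult_le_one\<close>)
  also have "\<dots> = exp ((1 - \<beta>) * (t / \<beta> - q * real (card N)))"
    using \<beta> by (simp add: exp_of_nat_mult[symmetric] exp_add[symmetric] field_simps)
  finally show ?thesis by (simp add: M_def)
qed

lemma prob_low_degree:
  fixes c :: real
  assumes a: "a < p" "a \<notin> B" and B: "B \<subseteq> {..<p}" "3 * card B = p"
    and c: "0 \<le> c" "c \<le> real p"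
  shows "measure_pmf.prob (erdos_renyi p (c / real p)) {G. real (card (nbrs G a B)) < c / 4}
         \<le> exp (- c / 180)"
proof -
  have "measure_pmf.prob (erdos_renyi p (c / real p)) {G. real (card (nbrs G a B)) < c / 4}
      \<le> measure_pmf.prob (erdos_renyi p (c / real p)) {G. real (card (nbrs G a B)) \<le> c / 4}"
    by (intro measure_pmf.finite_measure_mono) auto
  also have "\<dots> \<le> exp ((1 - 5/6) * (c / 4 / (5/6) - c / real p * real (card B)))"
    using a B(1) c by (intro prob_card_nbrs_le) auto
  also have "c / real p * real (card B) = c / 3"
    using B(2) c by (cases "p = 0") (auto simp: field_simps simp flip: of_nat_mult)
  finally show ?thesis by simp
qed

lemma prob_low_codegree:
  fixes c :: real
  assumes v: "v < p" "v \<notin> N" and N: "N \<subseteq> {..<p}" "c / 4 \<le> real (card N)"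
    and c: "0 \<le> c" "c \<le> real p"
  shows "measure_pmf.prob (erdos_renyi p (c / real p))
           {G. real (card (nbrs G v N)) < c\<^sup>2 / (6 * real p)}
         \<le> exp (- c\<^sup>2 / (120 * real p))"
proof -
  define \<gamma> where "\<gamma> = c\<^sup>2 / (6 * real p)"
  have "measure_pmf.prob (erdos_renyi p (c / real p)) {G. real (card (nbrs G v N)) < \<gamma>}
      \<le> measure_pmf.prob (erdos_renyi p (c / real p)) {G. real (card (nbrs G v N)) \<le> \<gamma>}"
    by (intro measure_pmf.finite_measure_mono) auto
  also have "\<dots> \<le> exp ((1 - 5/6) * (\<gamma> / (5/6) - c / real p * real (card N)))"
    using v N(1) c by (intro prob_card_nbrs_le) (auto simp: \<gamma>_def)
  also have "\<dots> \<le> exp (- c\<^sup>2 / (120 * real p))"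
  proof -
    have "c / real p * (c / 4) \<le> c / real p * real (card N)"
      using N(2) c by (intro mult_left_mono) auto
    then show ?thesis
      by (simp add: \<gamma>_def power2_eq_square field_simps)
  qed
  finally show ?thesis by (simp add: \<gamma>_def)
qed

lemma prob_all_low_degree:
  fixes c :: real
  assumes T: "finite T" "T \<subseteq> {..<p}" "T \<inter> B = {}" and B: "B \<subseteq> {..<p}" "3 * card B = p"
    and c: "0 \<le> c" "c \<le> real p"
  shows "measure_pmf.prob (erdos_renyi p (c / real p)) {G. \<forall>a\<in>T. real (card (nbrs G a B)) < c / 4}
         \<le> exp (- c / 180) ^ card T"
proof -
  have "measure_pmf.prob (erdos_renyi p (c / real p)) {G. \<forall>a\<in>T. real (card (nbrs G a B)) < c / 4}
      = (\<Prod>a\<in>T. measure_pmf.prob (erdos_renyi p (c / real p)) {G. real (card (nbrs G a B)) < c / 4})"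
  proof (rule prob_erdos_renyi_stars_indep[OF T B(1)])
    show "(real (card (nbrs G a B)) < c / 4) = (real (card (nbrs G' a B)) < c / 4)"
      if "\<And>b. b \<in> B \<Longrightarrow> G {a, b} = G' {a, b}" for a G G'
      using nbrs_cong[of B G a G', OF that] by simp
  qed
  also have "\<dots> \<le> (\<Prod>a\<in>T. exp (- c / 180))"
    using T B c by (intro prod_mono conjI measure_nonneg prob_low_degree) auto
  finally show ?thesis by simp
qed

lemma prob_nbrs_eq_low_codegrees:
  fixes c :: real
  assumes a: "a < p" "a \<notin> B" "a \<notin> S" and B: "B \<subseteq> {..<p}"
    and S: "finite S" "S \<subseteq> {..<p}" "S \<inter> B = {}"
    and N: "N \<subseteq> B" "c / 4 \<le> real (card N)" and c: "0 \<le> c" "c \<le> real p"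
  shows "measure_pmf.prob (erdos_renyi p (c / real p))
           {G. nbrs G a B = N \<and> (\<forall>v\<in>S. real (card (nbrs G v N)) < c\<^sup>2 / (6 * real p))}
         \<le> measure_pmf.prob (erdos_renyi p (c / real p)) {G. nbrs G a B = N} *
           exp (- c\<^sup>2 / (120 * real p)) ^ card S"
proof -
  define M where "M = erdos_renyi p (c / real p)"
  define P where "P = (\<lambda>v G. if v = a then nbrs G a B = N
                               else real (card (nbrs G v N)) < c\<^sup>2 / (6 * real p))"
  have "{G. nbrs G a B = N \<and> (\<forall>v\<in>S. real (card (nbrs G v N)) < c\<^sup>2 / (6 * real p))}
      = {G. \<forall>v\<in>insert a S. P v G}"
    unfolding P_def using a by auto
  also have "measure_pmf.prob M \<dots> = (\<Prod>v\<in>insert a S. measure_pmf.prob M {G. P v G})"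
    unfolding M_def
  proof (rule prob_erdos_renyi_stars_indep[OF _ _ _ B])
    show "P v G = P v G'" if "v \<in> insert a S" "\<And>b. b \<in> B \<Longrightarrow> G {v, b} = G' {v, b}" for v G G'
      using that N(1) unfolding P_def by (metis (no_types, lifting) nbrs_cong subsetD)
  qed (use a S in auto)
  also have "\<dots> = measure_pmf.prob M {G. nbrs G a B = N} * (\<Prod>v\<in>S. measure_pmf.prob M {G. P v G})"
    using S a by (simp add: P_def)
  also have "\<dots> \<le> measure_pmf.prob M {G. nbrs G a B = N} * (\<Prod>v\<in>S. exp (- c\<^sup>2 / (120 * real p)))"
  proof (intro mult_left_mono prod_mono conjI measure_nonneg)
    fix v assume v: "v \<in> S"
    then have "v \<noteq> a" using a by auto
    then have "measure_pmf.prob M {G. P v G}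
        = measure_pmf.prob M {G. real (card (nbrs G v N)) < c\<^sup>2 / (6 * real p)}"
      by (simp add: P_def)
    also have "\<dots> \<le> exp (- c\<^sup>2 / (120 * real p))"
      unfolding M_def using v S N B c by (intro prob_low_codegree) auto
    finally show "measure_pmf.prob M {G. P v G} \<le> exp (- c\<^sup>2 / (120 * real p))" .
  qed
  finally show ?thesis by (simp add: M_def)
qed

lemma prob_high_degree_low_codegrees:
  fixes c :: real
  assumes a: "a < p" "a \<notin> B" "a \<notin> S" and B: "B \<subseteq> {..<p}"
    and S: "finite S" "S \<subseteq> {..<p}" "S \<inter> B = {}" and c: "0 \<le> c" "c \<le> real p"
  shows "measure_pmf.prob (erdos_renyi p (c / real p))
           {G. c / 4 \<le> real (card (nbrs G a B)) \<and>
               (\<forall>v\<in>S. real (card (nbrs G v (nbrs G a B))) < c\<^sup>2 / (6 * real p))}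
         \<le> exp (- c\<^sup>2 / (120 * real p)) ^ card S"
proof -
  define M where "M = erdos_renyi p (c / real p)"
  define \<delta> where "\<delta> = exp (- c\<^sup>2 / (120 * real p)) ^ card S"
  define NN where "NN = {N. N \<subseteq> B \<and> c / 4 \<le> real (card N)}"
  define F where "F = (\<lambda>N. {G. nbrs G a B = N \<and>
                              (\<forall>v\<in>S. real (card (nbrs G v N)) < c\<^sup>2 / (6 * real p))})"
  have finNN: "finite NN"
    using B by (intro finite_subset[of NN "Pow B"]) (auto simp: NN_def dest: finite_subset)
  have "{G. c / 4 \<le> real (card (nbrs G a B)) \<and>
            (\<forall>v\<in>S. real (card (nbrs G v (nbrs G a B))) < c\<^sup>2 / (6 * real p))} = (\<Union>N\<in>NN. F N)"
    unfolding NN_def F_def by (auto simp: nbrs_def)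
  also have "measure_pmf.prob M \<dots> \<le> (\<Sum>N\<in>NN. measure_pmf.prob M (F N))"
    by (intro measure_pmf.finite_measure_subadditive_finite finNN) auto
  also have "\<dots> \<le> (\<Sum>N\<in>NN. measure_pmf.prob M {G. nbrs G a B = N} * \<delta>)"
    unfolding M_def F_def \<delta>_def NN_def
    using a B S c by (intro sum_mono prob_nbrs_eq_low_codegrees) auto
  also have "\<dots> = measure_pmf.prob M (\<Union>N\<in>NN. {G. nbrs G a B = N}) * \<delta>"
    by (subst measure_pmf.finite_measure_finite_Union[OF finNN])
       (auto simp: disjoint_family_on_def sum_distrib_right)
  also have "\<dots> \<le> \<delta>"
    by (intro mult_left_le_one_le) (auto simp: \<delta>_def)
  finally show ?thesis by (simp add: M_def \<delta>_def)
qed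

lemma prob_card_ge_le_two_pow:
  fixes M :: "'a pmf" and P :: "'a \<Rightarrow> 'b \<Rightarrow> bool"
  assumes X: "finite X" and \<delta>: "0 \<le> \<delta>"
    and bound: "\<And>T. T \<subseteq> X \<Longrightarrow> card T = k \<Longrightarrow> measure_pmf.prob M {\<omega>. \<forall>x\<in>T. P \<omega> x} \<le> \<delta>"
  shows "measure_pmf.prob M {\<omega>. k \<le> card {x\<in>X. P \<omega> x}} \<le> 2 ^ card X * \<delta>"
proof -
  define TT where "TT = {T. T \<subseteq> X \<and> card T = k}"
  have TT: "TT \<subseteq> Pow X" by (auto simp: TT_def)
  then have finTT: "finite TT" using X by (meson finite_Pow_iff finite_subset)
  have "{\<omega>. k \<le> card {x\<in>X. P \<omega> x}} \<subseteq> (\<Union>T\<in>TT. {\<omega>. \<forall>x\<in>T. P \<omega> x})"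
  proof
    fix \<omega> assume "\<omega> \<in> {\<omega>. k \<le> card {x\<in>X. P \<omega> x}}"
    then obtain T where "T \<subseteq> {x\<in>X. P \<omega> x}" "card T = k"
      by (meson mem_Collect_eq obtain_subset_with_card_n)
    then show "\<omega> \<in> (\<Union>T\<in>TT. {\<omega>. \<forall>x\<in>T. P \<omega> x})" by (auto simp: TT_def)
  qed
  then have "measure_pmf.prob M {\<omega>. k \<le> card {x\<in>X. P \<omega> x}}
      \<le> measure_pmf.prob M (\<Union>T\<in>TT. {\<omega>. \<forall>x\<in>T. P \<omega> x})"
    by (intro measure_pmf.finite_measure_mono) auto
  also have "\<dots> \<le> (\<Sum>T\<in>TT. measure_pmf.prob M {\<omega>. \<forall>x\<in>T. P \<omega> x})"
    by (intro measure_pmf.finite_measure_subadditive_finite finTT) auto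
  also have "\<dots> \<le> (\<Sum>T\<in>TT. \<delta>)"
    by (intro sum_mono bound) (auto simp: TT_def)
  also have "\<dots> \<le> 2 ^ card X * \<delta>"
  proof -
    have "card TT \<le> 2 ^ card X"
      using card_mono[OF _ TT] X by (simp add: card_Pow)
    then have "real (card TT) \<le> 2 ^ card X"
      by (metis of_nat_le_iff of_nat_numeral of_nat_power)
    then show ?thesis
      using \<delta> by (simp add: mult_right_mono)
  qed
  finally show ?thesis .
qed

lemma card_Sigma_Diff_ge:
  assumes A: "finite A" and C: "finite C" and L: "L \<subseteq> A" "card L \<le> l"
    and D: "\<And>a. D a \<subseteq> C" "\<And>a. a \<in> A - L \<Longrightarrow> card (D a) \<le> d"
  shows "(card A - l) * (card C - d) \<le> card (SIGMA a:A. C - D a)"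
proof -
  have "card A - l \<le> card (A - L)"
    using A L by (simp add: card_Diff_subset finite_subset)
  then have "(card A - l) * (card C - d) \<le> (\<Sum>a\<in>A - L. card C - d)"
    by simp
  also have "\<dots> \<le> (\<Sum>a\<in>A - L. card (C - D a))"
  proof (rule sum_mono)
    fix a assume "a \<in> A - L"
    then have "card C - d \<le> card C - card (D a)" using D(2) by (intro diff_le_mono2)
    also have "\<dots> \<le> card (C - D a)"
      using C D(1) by (intro diff_card_le_card_Diff) (rule finite_subset)
    finally show "card C - d \<le> card (C - D a)" .
  qed
  also have "\<dots> \<le> (\<Sum>a\<in>A. card (C - D a))"
    using A by (intro sum_mono2) auto
  also have "\<dots> = card (SIGMA a:A. C - D a)"
    using A C by simp
  finally show ?thesis .
qed

lemma m_AC_eq_card_Sigma: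
  assumes "A \<inter> B = {}" "B \<inter> C = {}"
  shows "m_AC G A B C \<gamma> =
         card (SIGMA a:A. C - {v\<in>C. real (card (nbrs G v (nbrs G a B))) < \<gamma>})"
proof -
  have "{b\<in>B. adj G a b \<and> adj G v b} = nbrs G v (nbrs G a B)" if "a \<in> A" "v \<in> C" for a v
    using that assms by (auto simp: adj_def nbrs_def)
  then show ?thesis
    unfolding m_AC_def by (intro arg_cong[where f = card]) (auto simp: not_less)
qed

lemma of_nat_sub_div_ge: "real n * (1 - 1 / real k) \<le> real (n - n div k)"
  using of_nat_div_le_of_nat[of n k] by (simp add: of_nat_diff algebra_simps)

lemma m_AC_small_cases:
  fixes c \<gamma> :: real
  assumes AB: "A \<inter> B = {}" and BC: "B \<inter> C = {}" and fin: "finite A" "finite C"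
    and n: "card A = n" "card C = n" "0 < n"
    and small: "real (m_AC G A B C \<gamma>) \<le> (real n)\<^sup>2 / 2"
  shows "n div 6 + 1 \<le> card {a\<in>A. real (card (nbrs G a B)) < c / 4} \<or>
         (\<exists>a\<in>A. c / 4 \<le> real (card (nbrs G a B)) \<and>
                n div 4 + 1 \<le> card {v\<in>C. real (card (nbrs G v (nbrs G a B))) < \<gamma>})"
proof (rule ccontr)
  define L where "L = {a\<in>A. real (card (nbrs G a B)) < c / 4}"
  define D where "D = (\<lambda>a. {v\<in>C. real (card (nbrs G v (nbrs G a B))) < \<gamma>})"
  assume "\<not> ?thesis"
  then have "card L \<le> n div 6" "\<And>a. a \<in> A - L \<Longrightarrow> card (D a) \<le> n div 4"
    by (auto simp: L_def D_def not_less)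
  then have "(n - n div 6) * (n - n div 4) \<le> m_AC G A B C \<gamma>"
    using card_Sigma_Diff_ge[OF fin, of L "n div 6" D "n div 4"] n
    by (auto simp: m_AC_eq_card_Sigma[OF AB BC] L_def D_def)
  then have "real (n - n div 6) * real (n - n div 4) \<le> (real n)\<^sup>2 / 2"
    using small by (metis of_nat_le_iff of_nat_mult order.trans)
  moreover have "real n * (5 / 6) * (real n * (3 / 4)) \<le> real (n - n div 6) * real (n - n div 4)"
    using of_nat_sub_div_ge[of n 6] of_nat_sub_div_ge[of n 4] by (intro mult_mono) auto
  moreover have "real n * (5 / 6) * (real n * (3 / 4)) = 5 / 8 * (real n)\<^sup>2"
    by (simp add: power2_eq_square)
  moreover have "0 < (real n)\<^sup>2"
    using n(3) by simp
  ultimately show False by linarith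
qed

lemma two_pow_mult_exp_pow_div_le:
  fixes x :: real
  assumes d: "0 < d" and x: "2 * real d \<le> x"
  shows "2 ^ n * exp (- x) ^ (n div d + 1) \<le> exp (- real n)"
proof -
  have "n \<le> d * (n div d + 1)"
    using dividend_less_times_div[OF d, of n] by simp
  then have "real n \<le> real d * real (n div d + 1)"
    by (metis of_nat_le_iff of_nat_mult)
  then have "2 * real n \<le> 2 * real d * real (n div d + 1)"
    by (simp add: mult.assoc)
  also have "\<dots> \<le> x * real (n div d + 1)"
    using x by (intro mult_right_mono) auto
  finally have nx: "2 * real n \<le> x * real (n div d + 1)" .
  have "2 ^ n * exp (- x) ^ (n div d + 1) \<le> exp (real n) * exp (- 2 * real n)"
  proof (rule mult_mono)
    have "(2::real) ^ n \<le> exp 1 ^ n"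
      using exp_ge_add_one_self[of 1] by (intro power_mono) auto
    then show "(2::real) ^ n \<le> exp (real n)"
      by (simp add: exp_of_nat_mult[symmetric])
    show "exp (- x) ^ (n div d + 1) \<le> exp (- 2 * real n)"
      using nx by (simp only: exp_of_nat_mult[symmetric] exp_le_cancel_iff) (simp add: mult.commute)
  qed auto
  then show ?thesis by (simp add: exp_add[symmetric])
qed

lemma one_add_mult_exp_neg_le:
  assumes "2 \<le> n"
  shows "(1 + real n) * exp (- real n) \<le> real n * exp (- real n / 12)"
proof -
  have "1 + real n \<le> real n * (1 + 11 * real n / 12)"
    using assms mult_mono[of 2 "real n" 2 "real n"] by (simp add: field_simps)
  also have "\<dots> \<le> real n * exp (11 * real n / 12)"
    using exp_ge_add_one_self[of "11 * real n / 12"] by (intro mult_left_mono) auto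
  finally have "(1 + real n) * exp (- real n) \<le> real n * exp (11 * real n / 12) * exp (- real n)"
    by (intro mult_right_mono) auto
  also have "\<dots> = real n * exp (- real n / 12)"
    by (simp add: exp_add[symmetric])
  finally show ?thesis .
qed

lemma prob_many_low_degree:
  fixes c :: real
  assumes A: "A \<subseteq> {..<p}" "A \<inter> B = {}" and B: "B \<subseteq> {..<p}" "3 * card B = p"
    and c: "0 \<le> c" "c \<le> real p" "2160 \<le> c"
  shows "measure_pmf.prob (erdos_renyi p (c / real p))
           {G. card A div 6 + 1 \<le> card {a\<in>A. real (card (nbrs G a B)) < c / 4}}
         \<le> exp (- real (card A))"
proof -
  have finA: "finite A" using A(1) by (rule finite_subset) simp
  have "measure_pmf.prob (erdos_renyi p (c / real p))
          {G. card A div 6 + 1 \<le> card {a\<in>A. real (card (nbrs G a B)) < c / 4}}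
      \<le> 2 ^ card A * exp (- (c / 180)) ^ (card A div 6 + 1)"
  proof (rule prob_card_ge_le_two_pow[OF finA])
    fix T assume T: "T \<subseteq> A" "card T = card A div 6 + 1"
    have "finite T" "T \<subseteq> {..<p}" "T \<inter> B = {}"
      using T(1) finA A by (auto dest: finite_subset)
    from prob_all_low_degree[OF this B c(1,2)]
    show "measure_pmf.prob (erdos_renyi p (c / real p)) {G. \<forall>a\<in>T. real (card (nbrs G a B)) < c / 4}
        \<le> exp (- (c / 180)) ^ (card A div 6 + 1)"
      by (simp add: T(2))
  qed simp
  also have "\<dots> \<le> exp (- real (card A))"
    using c(3) by (intro two_pow_mult_exp_pow_div_le) auto
  finally show ?thesis .
qed

lemma prob_many_low_codegrees:
  fixes c :: real
  assumes a: "a < p" "a \<notin> B" "a \<notin> C" and B: "B \<subseteq> {..<p}"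
    and C: "C \<subseteq> {..<p}" "C \<inter> B = {}" and c: "0 \<le> c" "c \<le> real p" "960 \<le> c\<^sup>2 / real p"
  shows "measure_pmf.prob (erdos_renyi p (c / real p))
           {G. c / 4 \<le> real (card (nbrs G a B)) \<and>
               card C div 4 + 1 \<le> card {v\<in>C. real (card (nbrs G v (nbrs G a B))) < c\<^sup>2 / (6 * real p)}}
         \<le> exp (- real (card C))"
proof -
  define M where "M = erdos_renyi p (c / real p)"
  define low where "low = (\<lambda>G v. real (card (nbrs G v (nbrs G a B))) < c\<^sup>2 / (6 * real p))"
  define P where "P = (\<lambda>G v. c / 4 \<le> real (card (nbrs G a B)) \<and> low G v)"
  have finC: "finite C" using C(1) by (rule finite_subset) simp
  have "measure_pmf.prob M {G. c / 4 \<le> real (card (nbrs G a B)) \<and>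
          card C div 4 + 1 \<le> card {v\<in>C. low G v}}
      \<le> measure_pmf.prob M {G. card C div 4 + 1 \<le> card {v\<in>C. P G v}}"
    by (intro measure_pmf.finite_measure_mono) (auto simp: P_def)
  also have "\<dots> \<le> 2 ^ card C * exp (- (c\<^sup>2 / (120 * real p))) ^ (card C div 4 + 1)"
  proof (rule prob_card_ge_le_two_pow[OF finC])
    fix T assume T: "T \<subseteq> C" "card T = card C div 4 + 1"
    then have "T \<noteq> {}" by auto
    then have "measure_pmf.prob M {G. \<forall>v\<in>T. P G v}
        \<le> measure_pmf.prob M {G. c / 4 \<le> real (card (nbrs G a B)) \<and> (\<forall>v\<in>T. low G v)}"
      by (intro measure_pmf.finite_measure_mono) (auto simp: P_def)
    also have "\<dots> \<le> exp (- c\<^sup>2 / (120 * real p)) ^ card T"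
      unfolding M_def low_def
      using a T B C finC c by (intro prob_high_degree_low_codegrees) (auto dest: finite_subset)
    finally show "measure_pmf.prob M {G. \<forall>v\<in>T. P G v}
        \<le> exp (- (c\<^sup>2 / (120 * real p))) ^ (card C div 4 + 1)"
      by (simp add: T(2))
  qed simp
  also have "\<dots> \<le> exp (- real (card C))"
    using c(3) by (intro two_pow_mult_exp_pow_div_le) auto
  finally show ?thesis by (simp add: M_def low_def)
qed

lemma prob_m_AC_small_le:
  fixes c :: real
  assumes part: "A \<union> B \<union> C = {..<p}" "A \<inter> B = {}" "A \<inter> C = {}" "B \<inter> C = {}"
    and cards: "3 * card A = p" "3 * card B = p" "3 * card C = p"
    and c: "0 \<le> c" "c \<le> real p" and dense: "2160 \<le> c\<^sup>2 / real p" and p: "6 \<le> p"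
  shows "measure_pmf.prob (erdos_renyi p (c / real p))
           {G. real (m_AC G A B C (c\<^sup>2 / (6 * real p))) \<le> (1/2) * (real p / 3)\<^sup>2}
         \<le> (real p / 3) * exp (- real p / 36)"
proof -
  define n where "n = card A"
  define M where "M = erdos_renyi p (c / real p)"
  define \<gamma> where "\<gamma> = c\<^sup>2 / (6 * real p)"
  define E1 where "E1 = {G. n div 6 + 1 \<le> card {a\<in>A. real (card (nbrs G a B)) < c / 4}}"
  define E2 where "E2 = (\<lambda>a. {G. c / 4 \<le> real (card (nbrs G a B)) \<and>
                      n div 4 + 1 \<le> card {v\<in>C. real (card (nbrs G v (nbrs G a B))) < \<gamma>}})"
  have pn: "p = 3 * n" and cC: "card C = n" using cards by (auto simp: n_def)
  have n2: "2 \<le> n" using p pn by simp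
  have sub: "A \<subseteq> {..<p}" "B \<subseteq> {..<p}" "C \<subseteq> {..<p}" using part(1) by auto
  then have fin: "finite A" "finite C" by (auto dest: finite_subset)
  have "c\<^sup>2 / real p \<le> c"
    using c p by (simp add: power2_eq_square divide_le_eq mult_left_mono)
  then have E1: "measure_pmf.prob M E1 \<le> exp (- real n)"
    unfolding M_def E1_def n_def using sub part cards c dense
    by (intro prob_many_low_degree) auto
  have E2: "measure_pmf.prob M (E2 a) \<le> exp (- real n)" if "a \<in> A" for a
    unfolding M_def E2_def \<gamma>_def cC[symmetric] using that sub part c dense
    by (intro prob_many_low_codegrees) auto
  have "{G. real (m_AC G A B C \<gamma>) \<le> (1/2) * (real p / 3)\<^sup>2} \<subseteq> E1 \<union> (\<Union>a\<in>A. E2 a)"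
    using m_AC_small_cases[OF part(2,4) fin n_def[symmetric] cC, of G \<gamma> c for G] n2
    by (auto simp: E1_def E2_def pn)
  then have "measure_pmf.prob M {G. real (m_AC G A B C \<gamma>) \<le> (1/2) * (real p / 3)\<^sup>2}
      \<le> measure_pmf.prob M (E1 \<union> (\<Union>a\<in>A. E2 a))"
    by (intro measure_pmf.finite_measure_mono) auto
  also have "\<dots> \<le> measure_pmf.prob M E1 + measure_pmf.prob M (\<Union>a\<in>A. E2 a)"
    by (rule measure_Un_le) auto
  also have "\<dots> \<le> exp (- real n) + real n * exp (- real n)"
  proof (rule add_mono[OF E1])
    have "measure_pmf.prob M (\<Union>a\<in>A. E2 a) \<le> (\<Sum>a\<in>A. measure_pmf.prob M (E2 a))"
      by (rule measure_UNION_le[OF fin(1)]) auto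
    also have "\<dots> \<le> (\<Sum>a\<in>A. exp (- real n))"
      by (intro sum_mono E2)
    finally show "measure_pmf.prob M (\<Union>a\<in>A. E2 a) \<le> real n * exp (- real n)"
      by (simp add: n_def)
  qed
  also have "\<dots> \<le> real n * exp (- real n / 12)"
    using one_add_mult_exp_neg_le[OF n2] by (simp add: algebra_simps)
  finally show ?thesis by (simp add: M_def \<gamma>_def pn)
qed

lemma eventually_le_sq_div:
  fixes c :: "nat \<Rightarrow> real" and \<epsilon> L :: real
  assumes \<epsilon>: "\<epsilon> > 0" and "c \<in> \<Omega>(\<lambda>p. real p powr (3/4 + \<epsilon>))"
  shows "eventually (\<lambda>p. L \<le> (c p)\<^sup>2 / real p) at_top"
proof -
  obtain K where K: "K > 0"
    and c_ge: "eventually (\<lambda>p. K * norm (real p powr (3/4 + \<epsilon>)) \<le> norm (c p)) at_top"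
    using assms(2) by (elim landau_omega.bigE) auto
  have "eventually (\<lambda>p. max 1 ((L / K\<^sup>2)\<^sup>2) \<le> real p) at_top"
    by (metis filterlim_at_top filterlim_real_sequentially)
  with c_ge show ?thesis
  proof eventually_elim
    case (elim p)
    then have p: "1 \<le> real p" "(L / K\<^sup>2)\<^sup>2 \<le> real p" by auto
    have "real p powr (3/4) \<le> real p powr (3/4 + \<epsilon>)"
      using p \<epsilon> by (intro powr_mono) auto
    then have "K * real p powr (3/4) \<le> \<bar>c p\<bar>"
      using elim K by (smt (verit) mult_left_mono norm_powr_real_powr real_norm_def)
    then have "(K * real p powr (3/4))\<^sup>2 \<le> (c p)\<^sup>2"
      using K by (metis power2_abs power_mono mult_nonneg_nonneg powr_ge_zero less_imp_le)
    also have "(K * real p powr (3/4))\<^sup>2 = K\<^sup>2 * sqrt (real p) * real p"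
    proof -
      have "(real p powr (3/4))\<^sup>2 = real p powr (1 + 1/2)"
        by (simp add: power2_eq_square powr_add[symmetric])
      also have "\<dots> = real p * sqrt (real p)"
        using powr_add[of "real p" 1 "1/2"] by (simp add: powr_half_sqrt)
      finally show ?thesis by (simp add: power_mult_distrib)
    qed
    finally have "K\<^sup>2 * sqrt (real p) \<le> (c p)\<^sup>2 / real p"
      using p by (simp add: pos_le_divide_eq)
    moreover have "L / K\<^sup>2 \<le> sqrt (real p)"
      using real_sqrt_le_mono[OF p(2)] abs_ge_self[of "L / K\<^sup>2"] by simp
    then have "L \<le> K\<^sup>2 * sqrt (real p)"
      using K by (simp add: field_simps)
    ultimately show ?case by linarith
  qed
qed

theorem lemma7:
  fixes c :: "nat \<Rightarrow> real" and \<epsilon>' :: real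
  assumes "\<epsilon>' > 0"
    and "c \<in> \<Omega>(\<lambda>p. real p powr (3/4 + \<epsilon>'))"
    and "eventually (\<lambda>p. 0 \<le> c p \<and> c p \<le> real p) at_top"
  shows "eventually (\<lambda>p. \<forall>A B C.
            A \<union> B \<union> C = {..<p} \<and> A \<inter> B = {} \<and> A \<inter> C = {} \<and> B \<inter> C = {} \<and>
            3 * card A = p \<and> 3 * card B = p \<and> 3 * card C = p \<longrightarrow>
            measure_pmf.prob (erdos_renyi p (c p / real p))
              {G. real (m_AC G A B C ((c p)\<^sup>2 / (6 * real p))) \<le> (1/2) * (real p / 3)\<^sup>2}
            \<le> (real p / 3) * exp (- real p / 36)) at_top"
  using eventually_le_sq_div[OF assms(1,2), of 2160] assms(3) eventually_ge_at_top[of 6]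
proof eventually_elim
  case (elim p)
  then show ?case
    by (intro allI impI) (elim conjE, rule prob_m_AC_small_le; assumption)
qed

end
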